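(* There exists $\beta_0>0$ such that for every inverse temperature $\beta>\beta_0$ and every translation invariant EA$_\beta$ spin glass distribution $\nu$ on $\mathbb Z^2$, $\nu$-almost surely every dual vertex lies on only finitely many unsatisfied simple dual cycles.
   Context: Lattice $\mathbb Z^2$, dual lattice $(\mathbb Z^2)^*=(\tfrac12,\tfrac12)+\mathbb Z^2$, each dual edge $e^*$ identified with the unique edge $e$ of $\mathbb Z^2$ it crosses. For a finite subgraph $C$: $C^c$ is the subgraph on $\mathbb Z^2\setminus V(C)$, $\partial C^c$ the vertices of $C^c$ with a neighbour in $C$, $\bar C=C\cup\partial C^c$; for $\tau\in\{\pm1\}^{V(\partial C^c)}$, $\mathbb P^{C,\tau}_{w,\beta}(\sigma)\propto\exp(\beta\sum w_{xy}\sigma_x\sigma_y)$ (sum over neighbouring pairs in $\bar C$) on spin configurations of $\bar C$ equal to $\tau$ on $\partial C^c$. An EA$_\beta$ spin glass distribution ($0\le\beta<\infty$) is a joint law of interactions $w$ (i.i.d. standard normal on $E(\mathbb Z^2)$) and spins $\sigma\in\{\pm1\}^{\mathbb Z^2}$ such that for every finite $C$ the conditional law of $\sigma_{\bar C}$ given $\sigma_{C^c}$ and $w$ is $\mathbb P^{C,\sigma_{\partial C^c}}_{w,\beta}$; translation invariance is under the diagonal action of $\mathbb Z^2$. An edge $e=\{i,j\}$ (and $e^*$) is unsatisfied if $w_e\sigma_i\sigma_j<0$; an unsatisfied cycle is a dual cycle all of whose edges are unsatisfied. *)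

theory Defs
  imports "HOL-Probability.Probability"
begin

text \<open>An edge of Z^2 is encoded as a pair (x, d):
  d = False is the horizontal edge {x, x+(1,0)}, d = True the vertical edge {x, x+(0,1)}.
  This is a bijection with the nearest-neighbour edges of Z^2.\<close>

type_synonym vertex = "int \<times> int"
type_synonym edge = "vertex \<times> bool"

definition other_end :: "edge \<Rightarrow> vertex" where
  "other_end e = (if snd e then (fst (fst e), snd (fst e) + 1) else (fst (fst e) + 1, snd (fst e)))"

text \<open>Sample space: interactions w and spins sigma (spins are real numbers in {-1,1}).\<close>

type_synonym config = "(edge \<Rightarrow> real) \<times> (vertex \<Rightarrow> real)"

definition W_M :: "(edge \<Rightarrow> real) measure" where
  "W_M = PiM UNIV (\<lambda>_. borel)"

definition spin_M :: "vertex set \<Rightarrow> (vertex \<Rightarrow> real) measure" where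
  "spin_M A = PiM A (\<lambda>_. count_space {-1, 1})"

definition Omega_M :: "config measure" where
  "Omega_M = W_M \<Otimes>\<^sub>M spin_M UNIV"

definition gauss_iid :: "(edge \<Rightarrow> real) measure" where
  "gauss_iid = PiM UNIV (\<lambda>_. density lborel (normal_density 0 1))"

text \<open>Edges with at least one endpoint in C (the interactions of C-bar that are not constant
  given the boundary condition).\<close>
definition edges_touching :: "vertex set \<Rightarrow> edge set" where
  "edges_touching C = {e. fst e \<in> C \<or> other_end e \<in> C}"

definition energy :: "vertex set \<Rightarrow> (edge \<Rightarrow> real) \<Rightarrow> (vertex \<Rightarrow> real) \<Rightarrow> real" where
  "energy C w s = (\<Sum>e\<in>edges_touching C. w e * s (fst e) * s (other_end e))"

definition glue :: "vertex set \<Rightarrow> (vertex \<Rightarrow> real) \<Rightarrow> (vertex \<Rightarrow> real) \<Rightarrow> (vertex \<Rightarrow> real)" where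
  "glue C xi tau = (\<lambda>x. if x \<in> C then xi x else tau x)"

text \<open>Finite-volume Gibbs probability P^{C,tau}_{w,beta} of the configuration eta on C,
  with boundary condition taken from tau (only tau on the outer boundary matters).\<close>
definition gibbs_prob :: "real \<Rightarrow> vertex set \<Rightarrow> (edge \<Rightarrow> real) \<Rightarrow> (vertex \<Rightarrow> real)
    \<Rightarrow> (vertex \<Rightarrow> real) \<Rightarrow> real" where
  "gibbs_prob \<beta> C w tau eta =
     exp (\<beta> * energy C w (glue C eta tau)) /
     (\<Sum>xi\<in>PiE C (\<lambda>_. {-1, 1}). exp (\<beta> * energy C w (glue C xi tau)))"

text \<open>The DLR condition says: for every finite C, the conditional
  law of sigma on C given w and sigma outside C is the Gibbs measure; expressed through the defining
  identity of conditional probabilities against all events of the conditioning sigma-algebra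
  (generated by w and the restriction of sigma to the complement of C).\<close>
definition EA_dist :: "real \<Rightarrow> config measure \<Rightarrow> bool" where
  "EA_dist \<beta> \<nu> \<longleftrightarrow>
     prob_space \<nu> \<and> sets \<nu> = sets Omega_M \<and>
     distr \<nu> W_M fst = gauss_iid \<and>
     (\<forall>C. finite C \<longrightarrow>
        (\<forall>eta \<in> PiE C (\<lambda>_. {-1, 1}). \<forall>B \<in> sets (W_M \<Otimes>\<^sub>M spin_M (- C)).
          measure \<nu> {\<omega> \<in> space \<nu>. (\<forall>x\<in>C. snd \<omega> x = eta x) \<and>
                                    (fst \<omega>, restrict (snd \<omega>) (- C)) \<in> B}
          = (\<integral>\<omega>. indicator {\<omega> \<in> space \<nu>. (fst \<omega>, restrict (snd \<omega>) (- C)) \<in> B} \<omega>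
                   * gibbs_prob \<beta> C (fst \<omega>) (snd \<omega>) eta \<partial>\<nu>)))"

definition shift :: "vertex \<Rightarrow> config \<Rightarrow> config" where
  "shift a \<omega> = ((\<lambda>e. fst \<omega> ((fst (fst e) + fst a, snd (fst e) + snd a), snd e)),
                 (\<lambda>x. snd \<omega> (fst x + fst a, snd x + snd a)))"

definition translation_invariant :: "config measure \<Rightarrow> bool" where
  "translation_invariant \<nu> \<longleftrightarrow> (\<forall>a. distr \<nu> \<nu> (shift a) = \<nu>)"

text \<open>Dual lattice: the dual vertex with index d = (a,b) is the point (a+1/2, b+1/2).
  Two dual vertices are adjacent iff at l1-distance 1; the dual edge between them is identified
  with the unique primal edge it crosses.\<close>
definition dual_adj :: "vertex \<Rightarrow> vertex \<Rightarrow> bool" where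
  "dual_adj u v \<longleftrightarrow> \<bar>fst u - fst v\<bar> + \<bar>snd u - snd v\<bar> = 1"

definition dual_edge :: "vertex \<Rightarrow> vertex \<Rightarrow> edge" where
  "dual_edge u v = (if fst u = fst v then ((fst u, max (snd u) (snd v)), False)
                    else ((max (fst u) (fst v), snd u), True))"

definition dual_cycle_list :: "vertex list \<Rightarrow> bool" where
  "dual_cycle_list vs \<longleftrightarrow> length vs \<ge> 3 \<and> distinct vs \<and>
     (\<forall>i < length vs. dual_adj (vs ! i) (vs ! ((i + 1) mod length vs)))"

definition cycle_edges :: "vertex list \<Rightarrow> edge set" where
  "cycle_edges vs = {dual_edge (vs ! i) (vs ! ((i + 1) mod length vs)) | i. i < length vs}"

definition dual_cycle_through :: "vertex \<Rightarrow> edge set \<Rightarrow> bool" where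
  "dual_cycle_through d S \<longleftrightarrow> (\<exists>vs. dual_cycle_list vs \<and> d \<in> set vs \<and> S = cycle_edges vs)"

definition unsatisfied :: "config \<Rightarrow> edge \<Rightarrow> bool" where
  "unsatisfied \<omega> e \<longleftrightarrow> fst \<omega> e * snd \<omega> (fst e) * snd \<omega> (other_end e) < 0"

end

(*
  Peierls argument.  A simple dual cycle meets every plaquette in an even number of edges, so
  it is the edge boundary of a finite set C of primal vertices.  If all boundary edges of C are
  unsatisfied, flipping the spins in C multiplies the Gibbs weight by exp (2 beta Sum |w e|);
  hence the DLR equations bound the probability that a given dual cycle of length n is
  unsatisfied by E exp (-2 beta Sum |w e|) <= beta^(-n).  At most n 4^n simple dual cycles of
  length n pass through a given dual vertex, so for beta > 8 these probabilities are summable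
  and Borel-Cantelli leaves only finitely many unsatisfied cycles through it.
*)
theory Submission
  imports Defs
begin

section \<open>Dual cycles and plaquettes\<close>

definition dual_nbrs :: "vertex \<Rightarrow> vertex set" where
  "dual_nbrs d = {(fst d + 1, snd d), (fst d - 1, snd d), (fst d, snd d + 1), (fst d, snd d - 1)}"

lemma dual_adj_iff_mem_dual_nbrs: "dual_adj d n \<longleftrightarrow> n \<in> dual_nbrs d"
  by (cases d; cases n) (auto simp: dual_adj_def dual_nbrs_def abs_if)

lemma finite_dual_nbrs: "finite (dual_nbrs d)"
  by (simp add: dual_nbrs_def)

lemma card_dual_nbrs_le: "card (dual_nbrs d) \<le> 4"
  unfolding dual_nbrs_def by (auto intro: card_insert_le_m1)

lemma dual_adj_sym: "dual_adj x y \<Longrightarrow> dual_adj y x"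
  unfolding dual_adj_def by (simp add: abs_minus_commute)

lemma dual_edge_commute: "dual_adj x y \<Longrightarrow> dual_edge x y = dual_edge y x"
  by (cases x; cases y) (auto simp: dual_edge_def dual_adj_def max_def abs_if split: if_splits)

definition dual_ends :: "edge \<Rightarrow> vertex set" where
  "dual_ends e = (if snd e then {(fst (fst e) - 1, snd (fst e)), fst e}
                  else {(fst (fst e), snd (fst e) - 1), fst e})"

lemma dual_ends_dual_edge: "dual_adj u v \<Longrightarrow> dual_ends (dual_edge u v) = {u, v}"
  by (cases u) (auto simp: dual_adj_iff_mem_dual_nbrs dual_nbrs_def dual_edge_def dual_ends_def)

lemma dual_edge_eq_cases:
  assumes "dual_adj u v" "dual_adj u' v'" "dual_edge u v = dual_edge u' v'"
  shows "(u = u' \<and> v = v') \<or> (u = v' \<and> v = u')"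
  using dual_ends_dual_edge[OF assms(1)] dual_ends_dual_edge[OF assms(2)] assms(3)
  by (auto simp: doubleton_eq_iff)

text \<open>The edges of the unit square centred at the dual vertex \<open>d\<close>, i.e. those crossed by the
  four dual edges at \<open>d\<close>.\<close>
definition plaquette :: "vertex \<Rightarrow> edge set" where
  "plaquette d = {((fst d, snd d), False), ((fst d, snd d + 1), False),
                  ((fst d, snd d), True), ((fst d + 1, snd d), True)}"

lemma plaquette_eq_dual_edge_image: "plaquette d = dual_edge d ` dual_nbrs d"
  unfolding plaquette_def dual_nbrs_def dual_edge_def by (auto simp: max_def)

lemma inj_on_dual_edge: "inj_on (dual_edge d) (dual_nbrs d)"
  by (cases d) (auto simp: inj_on_def dual_nbrs_def dual_edge_def max_def split: if_splits)

definition cycle_nbrs :: "vertex list \<Rightarrow> vertex \<Rightarrow> vertex set" where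
  "cycle_nbrs vs d = {n. \<exists>i<length vs. {vs ! i, vs ! ((i + 1) mod length vs)} = {d, n}}"

lemma plaquette_Int_cycle_edges:
  assumes cyc: "dual_cycle_list vs"
  shows "plaquette d \<inter> cycle_edges vs = dual_edge d ` cycle_nbrs vs d"
    and "cycle_nbrs vs d \<subseteq> dual_nbrs d"
proof -
  define L where "L = length vs"
  have adj: "\<And>i. i < L \<Longrightarrow> dual_adj (vs ! i) (vs ! ((i + 1) mod L))"
    using cyc unfolding dual_cycle_list_def L_def by auto
  have edge_iff: "dual_edge d n \<in> cycle_edges vs \<longleftrightarrow> n \<in> cycle_nbrs vs d" if "dual_adj d n" for n
  proof
    assume "dual_edge d n \<in> cycle_edges vs"
    then obtain i where i: "i < L" "dual_edge d n = dual_edge (vs ! i) (vs ! ((i + 1) mod L))"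
      unfolding cycle_edges_def L_def by auto
    from dual_edge_eq_cases[OF that adj[OF i(1)] i(2)] i(1) show "n \<in> cycle_nbrs vs d"
      unfolding cycle_nbrs_def L_def by (auto simp: doubleton_eq_iff)
  next
    assume "n \<in> cycle_nbrs vs d"
    then obtain i where i: "i < L" "{vs ! i, vs ! ((i + 1) mod L)} = {d, n}"
      unfolding cycle_nbrs_def L_def by auto
    have "dual_edge (vs ! i) (vs ! ((i + 1) mod L)) \<in> cycle_edges vs"
      unfolding cycle_edges_def L_def using i(1) L_def by auto
    with i(2) dual_edge_commute[OF adj[OF i(1)]] show "dual_edge d n \<in> cycle_edges vs"
      by (auto simp: doubleton_eq_iff)
  qed
  show nbrs: "cycle_nbrs vs d \<subseteq> dual_nbrs d"
  proof
    fix n assume "n \<in> cycle_nbrs vs d"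
    then obtain i where i: "i < L" "{vs ! i, vs ! ((i + 1) mod L)} = {d, n}"
      unfolding cycle_nbrs_def L_def by auto
    with adj[OF i(1)] have "dual_adj d n"
      by (auto simp: doubleton_eq_iff dual_adj_sym)
    then show "n \<in> dual_nbrs d" by (simp add: dual_adj_iff_mem_dual_nbrs)
  qed
  show "plaquette d \<inter> cycle_edges vs = dual_edge d ` cycle_nbrs vs d"
    unfolding plaquette_eq_dual_edge_image
    using nbrs edge_iff dual_adj_iff_mem_dual_nbrs by auto
qed

lemma cycle_nbrs_eq_empty: "d \<notin> set vs \<Longrightarrow> cycle_nbrs vs d = {}"
proof -
  assume "d \<notin> set vs"
  moreover have "vs ! i \<in> set vs \<and> vs ! ((i + 1) mod length vs) \<in> set vs" if "i < length vs" for i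
  proof -
    from that have "0 < length vs" by linarith
    then have "(i + 1) mod length vs < length vs" by simp
    with that show ?thesis by simp
  qed
  ultimately show ?thesis unfolding cycle_nbrs_def by (auto simp: doubleton_eq_iff)
qed

lemma cycle_nbrs_nth:
  assumes cyc: "dual_cycle_list vs" and j: "j < length vs"
  shows "cycle_nbrs vs (vs ! j)
    = {vs ! ((j + 1) mod length vs), vs ! ((j + length vs - 1) mod length vs)}"
proof -
  define L where "L = length vs"
  define jp where "jp = (j + L - 1) mod L"
  have L3: "L \<ge> 3" and dis: "distinct vs" using cyc unfolding dual_cycle_list_def L_def by auto
  have jL: "j < L" using j unfolding L_def .
  have nth_eq: "vs ! i = vs ! k \<longleftrightarrow> i = k" if "i < L" "k < L" for i k
    using dis that unfolding L_def by (simp add: nth_eq_iff_index_eq)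
  have jpL: "jp < L" unfolding jp_def using L3 by simp
  have succ_eq: "(i + 1) mod L = j \<longleftrightarrow> i = jp" if "i < L" for i
    using that jL L3 unfolding jp_def by (auto simp: mod_if)
  have "cycle_nbrs vs (vs ! j) = {vs ! ((j + 1) mod L), vs ! jp}"
  proof (intro set_eqI iffI)
    fix n assume "n \<in> cycle_nbrs vs (vs ! j)"
    then obtain i where i: "i < L" "{vs ! i, vs ! ((i + 1) mod L)} = {vs ! j, n}"
      unfolding cycle_nbrs_def L_def by auto
    have "(i + 1) mod L < L" using L3 by simp
    then show "n \<in> {vs ! ((j + 1) mod L), vs ! jp}"
      using i nth_eq[OF i(1) jL] nth_eq[OF _ jL] succ_eq[OF i(1)]
      by (auto simp: doubleton_eq_iff)
  next
    fix n assume "n \<in> {vs ! ((j + 1) mod L), vs ! jp}"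
    moreover have "(jp + 1) mod L = j" using succ_eq[OF jpL] by simp
    ultimately show "n \<in> cycle_nbrs vs (vs ! j)"
      unfolding cycle_nbrs_def L_def[symmetric] using jL jpL
      by (auto simp: doubleton_eq_iff)
  qed
  then show ?thesis unfolding L_def jp_def .
qed

lemma card_cycle_nbrs:
  assumes cyc: "dual_cycle_list vs"
  shows "card (cycle_nbrs vs d) = (if d \<in> set vs then 2 else 0)"
proof (cases "d \<in> set vs")
  case True
  then obtain j where j: "j < length vs" "d = vs ! j" by (auto simp: in_set_conv_nth)
  define L where "L = length vs"
  have L3: "L \<ge> 3" and dis: "distinct vs" using cyc unfolding dual_cycle_list_def L_def by auto
  have jL: "j < L" using j unfolding L_def by simp
  have "(j + 1) mod L = (if j + 1 = L then 0 else j + 1)" using jL by auto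
  moreover have "(j + L - 1) mod L = (if j = 0 then L - 1 else j - 1)"
    using jL L3 by (cases j) simp_all
  ultimately have "(j + 1) mod L \<noteq> (j + L - 1) mod L" "(j + 1) mod L < L" "(j + L - 1) mod L < L"
    using jL L3 by auto
  then have "vs ! ((j + 1) mod L) \<noteq> vs ! ((j + L - 1) mod L)"
    using dis unfolding L_def by (simp add: nth_eq_iff_index_eq)
  with True show ?thesis unfolding j(2) cycle_nbrs_nth[OF cyc j(1)] L_def by simp
qed (simp add: cycle_nbrs_eq_empty)

lemma even_card_plaquette_Int_cycle_edges:
  assumes "dual_cycle_list vs"
  shows "even (card (plaquette d \<inter> cycle_edges vs))"
proof -
  have "inj_on (dual_edge d) (cycle_nbrs vs d)"
    using inj_on_subset[OF inj_on_dual_edge plaquette_Int_cycle_edges(2)[OF assms]] .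
  then show ?thesis
    using plaquette_Int_cycle_edges(1)[OF assms] card_cycle_nbrs[OF assms]
    by (simp add: card_image)
qed

section \<open>Even edge sets are edge boundaries\<close>

definition edge_boundary :: "vertex set \<Rightarrow> edge set" where
  "edge_boundary C = {e. fst e \<in> C \<longleftrightarrow> other_end e \<notin> C}"

lemma finite_box_bound:
  assumes "finite S"
  obtains K :: int where "\<And>e. e \<in> S \<Longrightarrow> \<bar>fst (fst e)\<bar> < K \<and> \<bar>snd (fst e)\<bar> < K"
proof -
  define M where "M = Max (insert 0 ((\<lambda>e. \<bar>fst (fst e)\<bar> + \<bar>snd (fst e)\<bar>) ` S))"
  have "\<bar>fst (fst e)\<bar> + \<bar>snd (fst e)\<bar> \<le> M" if "e \<in> S" for e
    unfolding M_def using assms that by simp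
  then show ?thesis using that[of "M + 1"] by fastforce
qed

text \<open>The indicator of the set \<open>C\<close> with \<open>S = edge_boundary C\<close>: a point lies in \<open>C\<close> iff the
  horizontal ray to its right crosses \<open>S\<close> an odd number of times.\<close>
definition right_parity :: "edge set \<Rightarrow> int \<Rightarrow> int \<Rightarrow> bool" where
  "right_parity S a b = odd (card {k. a \<le> k \<and> ((k, b), False) \<in> S})"

lemma right_parity_step:
  assumes "finite S"
  shows "right_parity S a b \<longleftrightarrow> right_parity S (a + 1) b \<noteq> (((a, b), False) \<in> S)"
proof -
  let ?R = "\<lambda>a. {k. a \<le> k \<and> ((k, b), False) \<in> S}"
  have "?R (a + 1) \<subseteq> (\<lambda>e. fst (fst e)) ` S" by force
  then have "finite (?R (a + 1))" using assms finite_subset by blast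
  moreover have "?R a = (if ((a, b), False) \<in> S then insert a (?R (a + 1)) else ?R (a + 1))"
    by (auto simp: le_less)
  ultimately show ?thesis unfolding right_parity_def by auto
qed

context
  fixes S :: "edge set" and K :: int
  assumes box: "\<And>e. e \<in> S \<Longrightarrow> \<bar>fst (fst e)\<bar> < K \<and> \<bar>snd (fst e)\<bar> < K"
begin

lemma right_parity_outside_box: "a \<ge> K \<or> \<bar>b\<bar> \<ge> K \<Longrightarrow> \<not> right_parity S a b"
proof -
  assume "a \<ge> K \<or> \<bar>b\<bar> \<ge> K"
  then have empty: "{k. a \<le> k \<and> ((k, b), False) \<in> S} = {}" using box by fastforce
  show ?thesis unfolding right_parity_def empty by simp
qed

lemma right_parity_left_of_box: "a \<le> -K \<Longrightarrow> right_parity S a b = right_parity S (-K) b"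
proof -
  assume "a \<le> -K"
  then have "{k. a \<le> k \<and> ((k, b), False) \<in> S} = {k. -K \<le> k \<and> ((k, b), False) \<in> S}"
    using box by fastforce
  then show ?thesis unfolding right_parity_def by simp
qed

context
  assumes fin: "finite S" and even: "\<And>d. even (card (plaquette d \<inter> S))"
begin

lemma plaquette_parity:
  "((((a, q), False) \<in> S) = (((a, q + 1), False) \<in> S)) = ((((a, q), True) \<in> S) = (((a + 1, q), True) \<in> S))"
  using even[of "(a, q)"] unfolding plaquette_def
  by (cases "((a, q), False) \<in> S"; cases "((a, q + 1), False) \<in> S";
      cases "((a, q), True) \<in> S"; cases "((a + 1, q), True) \<in> S") (auto simp: Int_insert_left)

text \<open>Vertical edges are recovered from the plaquette parities by sweeping leftwards from the
  region right of the box, where \<open>right_parity\<close> vanishes.\<close>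
lemma right_parity_vertical:
  "(right_parity S a q \<noteq> right_parity S a (q + 1)) = (((a, q), True) \<in> S)"
proof (cases "a \<le> K")
  case True
  then show ?thesis
  proof (induction a rule: int_le_induct)
    case base
    then show ?case using right_parity_outside_box box[of "((K, q), True)"] by auto
  next
    case (step a)
    then show ?case
      using right_parity_step[OF fin, of "a - 1" q] right_parity_step[OF fin, of "a - 1" "q + 1"]
        plaquette_parity[of "a - 1" q] by auto
  qed
next
  case False
  then show ?thesis using right_parity_outside_box box[of "((a, q), True)"] by auto
qed

lemma right_parity_left_column: "\<not> right_parity S (-K) q"
proof (cases "q \<le> K")
  case True
  then show ?thesis
  proof (induction q rule: int_le_induct)
    case base
    then show ?case using right_parity_outside_box abs_ge_self by blast
  next
    case (step q)
    have "((-K, q - 1), True) \<notin> S" using box by force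
    with step.IH show ?case using right_parity_vertical[of "-K" "q - 1"] by simp
  qed
next
  case False
  then have "K \<le> \<bar>q\<bar>" by linarith
  then show ?thesis using right_parity_outside_box by blast
qed

end

end

lemma even_edge_set_eq_edge_boundary:
  assumes fin: "finite S" and even: "\<And>d. even (card (plaquette d \<inter> S))"
  shows "\<exists>C. finite C \<and> S = edge_boundary C"
proof -
  obtain K where K: "\<And>e. e \<in> S \<Longrightarrow> \<bar>fst (fst e)\<bar> < K \<and> \<bar>snd (fst e)\<bar> < K"
    using finite_box_bound[OF fin] by metis
  define C where "C = {x. right_parity S (fst x) (snd x)}"
  have "C \<subseteq> {-K..K} \<times> {-K..K}"
  proof
    fix x assume "x \<in> C"
    then have "right_parity S (fst x) (snd x)" unfolding C_def by simp
    then have "\<not> (fst x \<ge> K \<or> \<bar>snd x\<bar> \<ge> K)" "\<not> fst x \<le> -K"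
      using right_parity_outside_box[OF K] right_parity_left_of_box[OF K]
        right_parity_left_column[OF K fin even] by blast+
    then show "x \<in> {-K..K} \<times> {-K..K}" by (cases x) auto
  qed
  then have "finite C" by (rule finite_subset) auto
  moreover have "e \<in> S \<longleftrightarrow> e \<in> edge_boundary C" for e
  proof -
    obtain a b c where e: "e = ((a, b), c)" by (metis prod.collapse)
    show ?thesis
      using right_parity_vertical[OF K fin even, of a b] right_parity_step[OF fin, of a b]
      unfolding e C_def edge_boundary_def other_end_def by (cases c) auto
  qed
  ultimately show ?thesis by blast
qed

lemma cycle_edges_eq_edge_boundary:
  assumes "dual_cycle_list vs"
  shows "\<exists>C. finite C \<and> cycle_edges vs = edge_boundary C"
  by (rule even_edge_set_eq_edge_boundary)
    (simp add: cycle_edges_def, rule even_card_plaquette_Int_cycle_edges[OF assms])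

section \<open>Counting dual cycles\<close>

lemma card_cycle_edges:
  assumes cyc: "dual_cycle_list vs"
  shows "card (cycle_edges vs) = length vs"
proof -
  define L where "L = length vs"
  have L3: "L \<ge> 3" and dis: "distinct vs"
    and adj: "\<And>i. i < L \<Longrightarrow> dual_adj (vs ! i) (vs ! ((i + 1) mod L))"
    using cyc unfolding dual_cycle_list_def L_def by auto
  have "inj_on (\<lambda>i. dual_edge (vs ! i) (vs ! ((i + 1) mod L))) {..<L}"
  proof (rule inj_onI)
    fix i j assume i: "i \<in> {..<L}" and j: "j \<in> {..<L}"
      and eq: "dual_edge (vs ! i) (vs ! ((i + 1) mod L)) = dual_edge (vs ! j) (vs ! ((j + 1) mod L))"
    have "(i + 1) mod L < L" "(j + 1) mod L < L" using L3 by auto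
    then have "(i = j \<and> (i + 1) mod L = (j + 1) mod L) \<or> (i = (j + 1) mod L \<and> (i + 1) mod L = j)"
      using dual_edge_eq_cases[OF adj adj eq] i j dis unfolding L_def
      by (simp add: nth_eq_iff_index_eq)
    then show "i = j" using L3 i j by (auto simp: mod_if split: if_splits)
  qed
  moreover have "cycle_edges vs = (\<lambda>i. dual_edge (vs ! i) (vs ! ((i + 1) mod L))) ` {..<L}"
    unfolding cycle_edges_def L_def by auto
  ultimately show ?thesis by (simp add: card_image L_def)
qed

lemma finite_cycle_edges: "finite (cycle_edges vs)"
  by (simp add: cycle_edges_def)

text \<open>Walks of length \<open>m\<close> from \<open>d\<close>, listed without their starting vertex.\<close>
definition dual_walks :: "nat \<Rightarrow> vertex \<Rightarrow> vertex list set" where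
  "dual_walks m d = {xs. length xs = m \<and> (\<forall>k<m. dual_adj ((d # xs) ! k) ((d # xs) ! (k + 1)))}"

lemma dual_walks_Suc: "dual_walks (Suc m) d = (\<Union>v\<in>dual_nbrs d. Cons v ` dual_walks m v)"
proof (intro set_eqI iffI)
  fix xs assume "xs \<in> dual_walks (Suc m) d"
  then obtain v ys where xs: "xs = v # ys" and l: "length ys = m"
    and adj: "\<And>k. k < Suc m \<Longrightarrow> dual_adj ((d # v # ys) ! k) ((d # v # ys) ! (k + 1))"
    unfolding dual_walks_def by (cases xs) auto
  have "v \<in> dual_nbrs d"
    using adj[of 0] by (simp add: dual_adj_iff_mem_dual_nbrs)
  moreover have "dual_adj ((v # ys) ! k) ((v # ys) ! (k + 1))" if "k < m" for k
    using adj[of "Suc k"] that by simp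
  then have "ys \<in> dual_walks m v" unfolding dual_walks_def using l by simp
  ultimately show "xs \<in> (\<Union>v\<in>dual_nbrs d. Cons v ` dual_walks m v)" using xs by auto
next
  fix xs assume "xs \<in> (\<Union>v\<in>dual_nbrs d. Cons v ` dual_walks m v)"
  then obtain v ys where xs: "xs = v # ys" and v: "v \<in> dual_nbrs d" and ys: "ys \<in> dual_walks m v"
    by auto
  have "dual_adj ((d # v # ys) ! k) ((d # v # ys) ! (k + 1))" if "k < Suc m" for k
  proof (cases k)
    case 0
    then show ?thesis using v by (simp add: dual_adj_iff_mem_dual_nbrs)
  next
    case (Suc k')
    then show ?thesis using ys that unfolding dual_walks_def by simp
  qed
  then show "xs \<in> dual_walks (Suc m) d" using xs ys unfolding dual_walks_def by simp
qed

lemma finite_dual_walks: "finite (dual_walks m d)"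
proof (induction m arbitrary: d)
  case 0
  have "dual_walks 0 d = {[]}" unfolding dual_walks_def by auto
  then show ?case by simp
next
  case (Suc m)
  then show ?case unfolding dual_walks_Suc using finite_dual_nbrs by auto
qed

lemma card_dual_walks_le: "card (dual_walks m d) \<le> 4 ^ m"
proof (induction m arbitrary: d)
  case 0
  have "dual_walks 0 d = {[]}" unfolding dual_walks_def by auto
  then show ?case by simp
next
  case (Suc m)
  have "card (dual_walks (Suc m) d) \<le> (\<Sum>v\<in>dual_nbrs d. card (Cons v ` dual_walks m v))"
    unfolding dual_walks_Suc by (rule card_UN_le[OF finite_dual_nbrs])
  also have "\<dots> \<le> (\<Sum>v\<in>dual_nbrs d. 4 ^ m)"
    by (rule sum_mono) (meson Suc.IH card_image_le finite_dual_walks le_trans)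
  also have "\<dots> \<le> 4 * 4 ^ m" using card_dual_nbrs_le by simp
  finally show ?case by simp
qed

definition cycles_through :: "nat \<Rightarrow> vertex \<Rightarrow> vertex list set" where
  "cycles_through n d = {vs. dual_cycle_list vs \<and> length vs = n \<and> d \<in> set vs}"

lemma rotate_cycle_through_mem_walks:
  assumes "vs \<in> cycles_through n d"
  shows "\<exists>i<n. rotate i vs \<in> Cons d ` dual_walks (n - 1) d"
proof -
  have cyc: "dual_cycle_list vs" and L: "length vs = n" and "d \<in> set vs"
    using assms unfolding cycles_through_def by auto
  have L3: "n \<ge> 3" and adj: "\<And>i. i < n \<Longrightarrow> dual_adj (vs ! i) (vs ! ((i + 1) mod n))"
    using cyc L unfolding dual_cycle_list_def by auto
  obtain i where i: "i < n" "vs ! i = d" using \<open>d \<in> set vs\<close> L by (auto simp: in_set_conv_nth)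
  define r where "r = rotate i vs"
  have lr: "length r = n" unfolding r_def using L by simp
  have rn: "r ! k = vs ! ((i + k) mod n)" if "k < n" for k
    unfolding r_def using L that by (simp add: nth_rotate)
  have r: "r = d # tl r" using lr rn[of 0] i L3 by (cases r) auto
  have "tl r \<in> dual_walks (n - 1) d"
    unfolding dual_walks_def
  proof (intro CollectI conjI allI impI)
    show "length (tl r) = n - 1" using lr by simp
    fix k assume "k < n - 1"
    then have "(d # tl r) ! k = vs ! ((i + k) mod n)"
      and "(d # tl r) ! (k + 1) = vs ! (((i + k) mod n + 1) mod n)"
      using rn[of k] rn[of "k + 1"] r by (simp_all add: mod_Suc_eq)
    moreover have "(i + k) mod n < n" using L3 by simp
    ultimately show "dual_adj ((d # tl r) ! k) ((d # tl r) ! (k + 1))" using adj by simp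
  qed
  with r i show ?thesis unfolding r_def by (metis image_eqI)
qed

lemma bij_rotate: "bij (rotate i)"
  unfolding rotate_def by (rule bij_fn[OF bij_rotate1])

lemma finite_cycles_through: "finite (cycles_through n d)"
  and card_cycles_through_le: "card (cycles_through n d) \<le> n * 4 ^ n"
proof -
  define T where "T = Cons d ` dual_walks (n - 1) d"
  have "card T \<le> 4 ^ (n - 1)"
    unfolding T_def by (meson card_image_le card_dual_walks_le finite_dual_walks le_trans)
  also have "\<dots> \<le> 4 ^ n" by simp
  finally have card_T: "card T \<le> 4 ^ n" .
  have fin_T: "finite T" unfolding T_def by (simp add: finite_dual_walks)
  have fin_rot: "finite (rotate i -` T)" and card_rot: "card (rotate i -` T) = card T" for i
  proof -
    show "finite (rotate i -` T)" using finite_vimage_iff[OF bij_rotate] fin_T by blast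
    show "card (rotate i -` T) = card T"
      by (rule card_vimage_inj[OF bij_is_inj[OF bij_rotate]]) (simp add: bij_is_surj[OF bij_rotate])
  qed
  have sub: "cycles_through n d \<subseteq> (\<Union>i<n. rotate i -` T)"
  proof
    fix vs assume "vs \<in> cycles_through n d"
    then obtain i where "i < n" "rotate i vs \<in> T"
      using rotate_cycle_through_mem_walks unfolding T_def by blast
    then show "vs \<in> (\<Union>i<n. rotate i -` T)" by blast
  qed
  show "finite (cycles_through n d)" using finite_subset[OF sub] fin_rot by blast
  have "card (cycles_through n d) \<le> card (\<Union>i<n. rotate i -` T)"
    using card_mono[OF _ sub] fin_rot by blast
  also have "\<dots> \<le> (\<Sum>i<n. card (rotate i -` T))" by (rule card_UN_le) simp
  also have "\<dots> \<le> n * 4 ^ n" using card_rot card_T by (simp add: sum_bounded_above)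
  finally show "card (cycles_through n d) \<le> n * 4 ^ n" .
qed

section \<open>A Gaussian estimate\<close>

abbreviation std_normal :: "real measure" where
  "std_normal \<equiv> density lborel (\<lambda>x. ennreal (std_normal_density x))"

lemma std_normal_density_le_1: "std_normal_density x \<le> 1"
proof -
  have "1 / sqrt (2 * pi) \<le> 1" using pi_ge_two by simp
  then show ?thesis unfolding std_normal_density_def by (rule mult_le_one) simp_all
qed

lemma nn_integral_exponential_density:
  assumes "l > 0"
  shows "(\<integral>\<^sup>+x. ennreal (exponential_density l x) \<partial>lborel) = 1"
proof -
  interpret prob_space "density lborel (\<lambda>x. ennreal (exponential_density l x))"
    using prob_space_exponential_density[OF assms] by simp
  have "emeasure (density lborel (\<lambda>x. ennreal (exponential_density l x))) UNIV = 1"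
    using emeasure_space_1 by simp
  then show ?thesis by (simp add: emeasure_density)
qed

lemma nn_integral_exponential_density_uminus:
  assumes "l > 0"
  shows "(\<integral>\<^sup>+x. ennreal (exponential_density l (- x)) \<partial>lborel) = 1"
proof -
  have "(\<integral>\<^sup>+x. ennreal (exponential_density l x) \<partial>distr lborel borel uminus)
      = (\<integral>\<^sup>+x. ennreal (exponential_density l (- x)) \<partial>lborel)"
    by (rule nn_integral_distr) auto
  then show ?thesis using nn_integral_exponential_density[OF assms] lborel_distr_uminus by simp
qed

text \<open>\<open>exp (-2\<beta>|x|)\<close> is \<open>1/(2\<beta>)\<close> times the sum of the exponential densities of rate \<open>2\<beta>\<close>
  at \<open>x\<close> and \<open>-x\<close>, and the Gaussian density is at most \<open>1\<close>.\<close>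
lemma nn_integral_std_normal_exp_abs_le:
  fixes \<beta> :: real
  assumes b: "\<beta> > 0"
  shows "(\<integral>\<^sup>+x. ennreal (exp (- 2 * \<beta> * \<bar>x\<bar>)) \<partial>std_normal) \<le> ennreal (1 / \<beta>)"
proof -
  define ed where "ed = exponential_density (2 * \<beta>)"
  have [measurable]: "ed \<in> borel_measurable borel" by (simp add: ed_def)
  have "(\<integral>\<^sup>+x. ennreal (exp (- 2 * \<beta> * \<bar>x\<bar>)) \<partial>std_normal)
      = (\<integral>\<^sup>+x. ennreal (std_normal_density x) * ennreal (exp (- 2 * \<beta> * \<bar>x\<bar>)) \<partial>lborel)"
    by (rule nn_integral_density) auto
  also have "\<dots> \<le> (\<integral>\<^sup>+x. ennreal (1 / (2 * \<beta>)) * (ennreal (ed x) + ennreal (ed (- x))) \<partial>lborel)"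
  proof (rule nn_integral_mono)
    fix x :: real
    have "std_normal_density x * exp (- 2 * \<beta> * \<bar>x\<bar>) \<le> exp (- 2 * \<beta> * \<bar>x\<bar>)"
      using std_normal_density_le_1 by (simp add: mult_left_le_one_le)
    also have "\<dots> \<le> 1 / (2 * \<beta>) * (ed x + ed (- x))"
      unfolding ed_def exponential_density_def using b by (auto simp: abs_if)
    finally show "ennreal (std_normal_density x) * ennreal (exp (- 2 * \<beta> * \<bar>x\<bar>))
        \<le> ennreal (1 / (2 * \<beta>)) * (ennreal (ed x) + ennreal (ed (- x)))"
      using b exponential_density_nonneg[of "2 * \<beta>"]
      by (simp add: ed_def ennreal_mult[symmetric] ennreal_plus[symmetric] del: ennreal_plus)
  qed
  also have "\<dots> = ennreal (1 / (2 * \<beta>)) * ennreal 2"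
    using nn_integral_exponential_density[of "2 * \<beta>"] nn_integral_exponential_density_uminus[of "2 * \<beta>"] b
    by (simp add: ed_def nn_integral_cmult nn_integral_add)
  also have "\<dots> = ennreal (1 / (2 * \<beta>) * 2)" by (rule ennreal_mult[symmetric]) (use b in simp_all)
  also have "\<dots> = ennreal (1 / \<beta>)" by simp
  finally show ?thesis .
qed

lemma nn_integral_gauss_iid_exp_sum_abs_le:
  fixes \<beta> :: real
  assumes b: "\<beta> > 0" and S: "finite S"
  shows "(\<integral>\<^sup>+w. ennreal (exp (- 2 * \<beta> * (\<Sum>e\<in>S. \<bar>w e\<bar>))) \<partial>gauss_iid) \<le> ennreal ((1 / \<beta>) ^ card S)"
proof -
  interpret product_prob_space "\<lambda>_::edge. std_normal" UNIV
    by (rule product_prob_spaceI) (simp add: prob_space_normal_density)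
  let ?f = "\<lambda>w::edge \<Rightarrow> real. \<Prod>e\<in>S. ennreal (exp (- 2 * \<beta> * \<bar>w e\<bar>))"
  have f_meas: "?f \<in> borel_measurable (PiM S (\<lambda>_. std_normal))"
    by (intro borel_measurable_prod_ennreal measurable_compose[OF measurable_component_singleton]) auto
  have "ennreal (exp (- 2 * \<beta> * (\<Sum>e\<in>S. \<bar>w e\<bar>))) = ?f w" for w :: "edge \<Rightarrow> real"
    using S by (simp add: sum_distrib_left exp_sum prod_ennreal)
  then have "(\<integral>\<^sup>+w. ennreal (exp (- 2 * \<beta> * (\<Sum>e\<in>S. \<bar>w e\<bar>))) \<partial>gauss_iid)
      = (\<integral>\<^sup>+w. ?f (restrict w S) \<partial>PiM UNIV (\<lambda>_. std_normal))"
    unfolding gauss_iid_def by simp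
  also have "\<dots> = (\<integral>\<^sup>+w. ?f w \<partial>distr (PiM UNIV (\<lambda>_. std_normal)) (PiM S (\<lambda>_. std_normal)) (\<lambda>w. restrict w S))"
    by (rule nn_integral_distr[symmetric, OF measurable_restrict_subset])
      (simp_all add: f_meas)
  also have "\<dots> = (\<integral>\<^sup>+w. ?f w \<partial>PiM S (\<lambda>_. std_normal))"
    using distr_PiM_restrict_finite[OF S] by simp
  also have "\<dots> = (\<Prod>e\<in>S. \<integral>\<^sup>+x. ennreal (exp (- 2 * \<beta> * \<bar>x\<bar>)) \<partial>std_normal)"
    by (rule product_nn_integral_prod[OF S]) simp
  also have "\<dots> \<le> (\<Prod>e\<in>S. ennreal (1 / \<beta>))"
    by (rule prod_mono_ennreal) (rule nn_integral_std_normal_exp_abs_le[OF b])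
  also have "\<dots> = ennreal ((1 / \<beta>) ^ card S)" using b by (simp add: ennreal_power)
  finally show ?thesis .
qed

section \<open>Measurability and finite-volume Gibbs weights\<close>

lemma space_W_M: "space W_M = UNIV"
  unfolding W_M_def by (simp add: space_PiM PiE_UNIV_domain)

lemma space_spin_M: "space (spin_M A) = PiE A (\<lambda>_. {-1, 1})"
  unfolding spin_M_def by (simp add: space_PiM)

lemma spin_mem_space_Omega_M: "\<omega> \<in> space Omega_M \<Longrightarrow> snd \<omega> x \<in> {-1, 1}"
  unfolding Omega_M_def by (auto simp: space_pair_measure space_spin_M)

lemma measurable_W_M_component[measurable]: "(\<lambda>w. w e) \<in> borel_measurable W_M"
  unfolding W_M_def by (rule measurable_component_singleton) simp

lemma measurable_spin_M_component: "x \<in> A \<Longrightarrow> (\<lambda>\<tau>. \<tau> x) \<in> borel_measurable (spin_M A)"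
  unfolding spin_M_def by (rule measurable_compose[OF measurable_component_singleton]) auto

lemma measurable_interaction[measurable]: "(\<lambda>\<omega>. fst \<omega> e) \<in> borel_measurable Omega_M"
  unfolding Omega_M_def by (rule measurable_compose[OF measurable_fst measurable_W_M_component])

lemma measurable_spin[measurable]: "(\<lambda>\<omega>. snd \<omega> x) \<in> borel_measurable Omega_M"
  unfolding Omega_M_def by (rule measurable_compose[OF measurable_snd measurable_spin_M_component]) simp

lemma measurable_glue_spin[measurable]: "(\<lambda>\<omega>. glue C eta (snd \<omega>) x) \<in> borel_measurable Omega_M"
  unfolding glue_def by (cases "x \<in> C") simp_all

lemma measurable_gibbs_prob[measurable]:
  "(\<lambda>\<omega>. gibbs_prob \<beta> C (fst \<omega>) (snd \<omega>) eta) \<in> borel_measurable Omega_M"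
  unfolding gibbs_prob_def energy_def by measurable

lemma measurable_pair_interaction[measurable]:
  "(\<lambda>p. fst p e) \<in> borel_measurable (W_M \<Otimes>\<^sub>M spin_M A)"
  by (rule measurable_compose[OF measurable_fst measurable_W_M_component])

lemma measurable_pair_glue[measurable]:
  "(\<lambda>p. glue C eta (snd p) x) \<in> borel_measurable (W_M \<Otimes>\<^sub>M spin_M (- C))"
proof (cases "x \<in> C")
  case False
  then have glue_eq: "(\<lambda>p. glue C eta (snd p) x) = (\<lambda>p. snd p x)" unfolding glue_def by auto
  show ?thesis unfolding glue_eq
    by (rule measurable_compose[OF measurable_snd measurable_spin_M_component]) (use False in simp)
qed (simp add: glue_def)

lemma measurable_outside_projection[measurable]:
  "(\<lambda>\<omega>. (fst \<omega>, restrict (snd \<omega>) (- C))) \<in> Omega_M \<rightarrow>\<^sub>M W_M \<Otimes>\<^sub>M spin_M (- C)"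
proof -
  have "(\<lambda>\<omega>. restrict (snd \<omega>) (- C)) \<in> Omega_M \<rightarrow>\<^sub>M spin_M (- C)"
    unfolding Omega_M_def spin_M_def
    by (rule measurable_compose[OF measurable_snd measurable_restrict_subset]) simp
  then show ?thesis unfolding Omega_M_def by measurable
qed

lemma pred_outside_projection:
  "B \<in> sets (W_M \<Otimes>\<^sub>M spin_M (- C)) \<Longrightarrow>
    Measurable.pred Omega_M (\<lambda>\<omega>. (fst \<omega>, restrict (snd \<omega>) (- C)) \<in> B)"
  using pred_sets2[OF _ measurable_outside_projection] by simp

lemma sets_all_unsatisfied:
  "finite S \<Longrightarrow> {\<omega> \<in> space Omega_M. \<forall>e\<in>S. unsatisfied \<omega> e} \<in> sets Omega_M"
  unfolding unsatisfied_def by measurable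

lemma finite_edges_touching: "finite C \<Longrightarrow> finite (edges_touching C)"
proof -
  assume C: "finite C"
  have "edges_touching C \<subseteq> C \<times> UNIV \<union> (\<lambda>x. ((fst x - 1, snd x), False)) ` C
                           \<union> (\<lambda>x. ((fst x, snd x - 1), True)) ` C"
  proof
    fix e assume "e \<in> edges_touching C"
    moreover obtain a b c where "e = ((a, b), c)" by (metis prod.collapse)
    ultimately show "e \<in> C \<times> UNIV \<union> (\<lambda>x. ((fst x - 1, snd x), False)) ` C
                           \<union> (\<lambda>x. ((fst x, snd x - 1), True)) ` C"
      by (cases c) (force simp: edges_touching_def other_end_def)+
  qed
  then show ?thesis by (rule finite_subset) (simp add: C)
qed

lemma finite_edge_boundary: "finite C \<Longrightarrow> finite (edge_boundary C)"
  by (rule finite_subset[OF _ finite_edges_touching]) (auto simp: edge_boundary_def edges_touching_def)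

lemma glue_restrict: "glue C (restrict eta C) tau = glue C eta tau"
  unfolding glue_def by auto

lemma gibbs_prob_restrict: "gibbs_prob \<beta> C w tau (restrict eta C) = gibbs_prob \<beta> C w tau eta"
  unfolding gibbs_prob_def glue_restrict ..

lemma gibbs_prob_nonneg: "gibbs_prob \<beta> C w tau eta \<ge> 0"
  unfolding gibbs_prob_def by (auto intro!: divide_nonneg_nonneg sum_nonneg)

lemma sum_gibbs_prob:
  assumes "finite C"
  shows "(\<Sum>eta\<in>PiE C (\<lambda>_. {-1, 1}). gibbs_prob \<beta> C w tau eta) = 1"
proof -
  let ?P = "PiE C (\<lambda>_. {-1::real, 1})"
  have "finite ?P" "?P \<noteq> {}" using assms by (simp_all add: finite_PiE PiE_eq_empty_iff)
  then have "(\<Sum>xi\<in>?P. exp (\<beta> * energy C w (glue C xi tau))) > 0" by (intro sum_pos) auto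
  then show ?thesis unfolding gibbs_prob_def by (simp add: sum_divide_distrib[symmetric])
qed

lemma sum_gibbs_prob_uminus:
  assumes "finite C"
  shows "(\<Sum>eta\<in>PiE C (\<lambda>_. {-1, 1}). gibbs_prob \<beta> C w tau (\<lambda>x. - eta x)) = 1"
proof -
  let ?P = "PiE C (\<lambda>_. {-1::real, 1})" and ?n = "\<lambda>eta. restrict (\<lambda>x. - eta x) C"
  have "(\<Sum>eta\<in>?P. gibbs_prob \<beta> C w tau (\<lambda>x. - eta x)) = (\<Sum>eta\<in>?P. gibbs_prob \<beta> C w tau (?n eta))"
    by (simp add: gibbs_prob_restrict)
  also have "\<dots> = (\<Sum>eta\<in>?P. gibbs_prob \<beta> C w tau eta)"
    by (rule sum.reindex_bij_witness[where i = ?n and j = ?n]) (auto simp: PiE_def extensional_def)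
  finally show ?thesis using sum_gibbs_prob[OF assms] by simp
qed

lemma gibbs_prob_le_1:
  assumes "finite C" and "\<forall>x\<in>C. eta x \<in> {-1, 1}"
  shows "gibbs_prob \<beta> C w tau eta \<le> 1"
proof -
  have "restrict eta C \<in> PiE C (\<lambda>_. {-1, 1})" using assms(2) unfolding PiE_def by auto
  then have "gibbs_prob \<beta> C w tau (restrict eta C)
      \<le> (\<Sum>xi\<in>PiE C (\<lambda>_. {-1, 1}). gibbs_prob \<beta> C w tau xi)"
    by (rule member_le_sum) (simp_all add: gibbs_prob_nonneg finite_PiE assms(1))
  then show ?thesis using sum_gibbs_prob[OF assms(1)] by (simp add: gibbs_prob_restrict)
qed

text \<open>Flipping the spins in \<open>C\<close> changes the sign of exactly the terms of the boundary edges;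
  an unsatisfied boundary edge contributes \<open>-|w e|\<close> before the flip and \<open>|w e|\<close> after it.\<close>
lemma energy_flip:
  assumes C: "finite C" and eta: "\<forall>x\<in>C. eta x \<in> {-1, 1}" and tau: "\<forall>x. tau x \<in> {-1, 1}"
    and uns: "\<forall>e\<in>edge_boundary C.
      w e * glue C eta tau (fst e) * glue C eta tau (other_end e) < 0"
  shows "energy C w (glue C eta tau)
    = energy C w (glue C (\<lambda>x. - eta x) tau) - 2 * (\<Sum>e\<in>edge_boundary C. \<bar>w e\<bar>)"
proof -
  let ?S = "edge_boundary C" and ?T = "edges_touching C"
  let ?t = "\<lambda>s e. w e * s (fst e) * s (other_end e)"
  let ?g = "glue C eta tau" and ?h = "glue C (\<lambda>x. - eta x) tau"
  have S_sub: "?S \<subseteq> ?T" by (auto simp: edge_boundary_def edges_touching_def)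
  have flip_term: "?t ?g e = ?t ?h e - (if e \<in> ?S then 2 * \<bar>w e\<bar> else 0)" if "e \<in> ?T" for e
  proof (cases "e \<in> ?S")
    case True
    have "?g x \<in> {-1, 1}" for x using eta tau[rule_format, of x] by (simp add: glue_def)
    then have "?g (fst e) \<in> {-1, 1}" "?g (other_end e) \<in> {-1, 1}" and "?t ?g e < 0"
      using uns True by blast+
    then have "?t ?g e = - \<bar>w e\<bar>" by (auto simp: abs_if)
    moreover have "?t ?h e = - ?t ?g e" using True by (auto simp: edge_boundary_def glue_def)
    ultimately show ?thesis using True by simp
  next
    case False
    with that show ?thesis by (auto simp: edge_boundary_def edges_touching_def glue_def)
  qed
  have "energy C w ?g = energy C w ?h - (\<Sum>e\<in>?T. if e \<in> ?S then 2 * \<bar>w e\<bar> else 0)"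
    unfolding energy_def using flip_term by (simp add: sum_subtractf)
  also have "(\<Sum>e\<in>?T. if e \<in> ?S then 2 * \<bar>w e\<bar> else 0) = 2 * (\<Sum>e\<in>?S. \<bar>w e\<bar>)"
    using finite_edges_touching[OF C] S_sub
    by (simp add: sum.inter_restrict[symmetric] Int_absorb1 sum_distrib_left)
  finally show ?thesis .
qed

lemma gibbs_prob_flip:
  assumes "finite C" and "\<forall>x\<in>C. eta x \<in> {-1, 1}" and "\<forall>x. tau x \<in> {-1, 1}"
    and "\<forall>e\<in>edge_boundary C.
      w e * glue C eta tau (fst e) * glue C eta tau (other_end e) < 0"
  shows "gibbs_prob \<beta> C w tau eta
    = exp (- 2 * \<beta> * (\<Sum>e\<in>edge_boundary C. \<bar>w e\<bar>)) * gibbs_prob \<beta> C w tau (\<lambda>x. - eta x)"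
proof -
  have "exp (\<beta> * energy C w (glue C eta tau)) = exp (- 2 * \<beta> * (\<Sum>e\<in>edge_boundary C. \<bar>w e\<bar>))
      * exp (\<beta> * energy C w (glue C (\<lambda>x. - eta x) tau))"
    unfolding energy_flip[OF assms] by (simp add: algebra_simps flip: exp_add)
  then show ?thesis unfolding gibbs_prob_def by simp
qed

section \<open>The Peierls bound\<close>

lemma EA_distD:
  assumes "EA_dist \<beta> \<nu>"
  shows "prob_space \<nu>" and "sets \<nu> = sets Omega_M" and "distr \<nu> W_M fst = gauss_iid"
  using assms unfolding EA_dist_def by blast+

lemma EA_dist_DLR:
  assumes "EA_dist \<beta> \<nu>" and "finite C" and "eta \<in> PiE C (\<lambda>_. {-1, 1})"
    and "B \<in> sets (W_M \<Otimes>\<^sub>M spin_M (- C))"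
  shows "measure \<nu> {\<omega> \<in> space \<nu>. (\<forall>x\<in>C. snd \<omega> x = eta x) \<and> (fst \<omega>, restrict (snd \<omega>) (- C)) \<in> B}
    = (\<integral>\<omega>. indicator {\<omega> \<in> space \<nu>. (fst \<omega>, restrict (snd \<omega>) (- C)) \<in> B} \<omega>
           * gibbs_prob \<beta> C (fst \<omega>) (snd \<omega>) eta \<partial>\<nu>)"
  using assms unfolding EA_dist_def by blast

lemma measure_DLR_event_le_integral:
  assumes EA: "EA_dist \<beta> \<nu>" and C: "finite C" and eta: "eta \<in> PiE C (\<lambda>_. {-1, 1})"
    and B: "B \<in> sets (W_M \<Otimes>\<^sub>M spin_M (- C))" and g: "integrable \<nu> g"
    and g_nonneg: "\<And>\<omega>. \<omega> \<in> space \<nu> \<Longrightarrow> 0 \<le> g \<omega>"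
    and gibbs_le: "\<And>\<omega>. \<omega> \<in> space \<nu> \<Longrightarrow> (fst \<omega>, restrict (snd \<omega>) (- C)) \<in> B \<Longrightarrow>
      gibbs_prob \<beta> C (fst \<omega>) (snd \<omega>) eta \<le> g \<omega>"
  shows "measure \<nu> {\<omega> \<in> space \<nu>. (\<forall>x\<in>C. snd \<omega> x = eta x) \<and> (fst \<omega>, restrict (snd \<omega>) (- C)) \<in> B}
    \<le> integral\<^sup>L \<nu> g"
proof -
  interpret prob_space \<nu> by (rule EA_distD(1)[OF EA])
  note sets_eq = EA_distD(2)[OF EA]
  define I where "I = {\<omega> \<in> space \<nu>. (fst \<omega>, restrict (snd \<omega>) (- C)) \<in> B}"
  define G where "G \<omega> = gibbs_prob \<beta> C (fst \<omega>) (snd \<omega>) eta" for \<omega>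
  have "I \<in> sets \<nu>"
    unfolding I_def sets_eq sets_eq_imp_space_eq[OF sets_eq]
    using pred_outside_projection[OF B] by measurable
  moreover have "G \<in> borel_measurable \<nu>"
    unfolding G_def measurable_cong_sets[OF sets_eq refl] by measurable
  moreover have "norm (indicator I \<omega> * G \<omega>) \<le> 1" for \<omega>
    using gibbs_prob_nonneg gibbs_prob_le_1[OF C] eta
    by (auto simp: G_def indicator_def PiE_iff)
  ultimately have "integrable \<nu> (\<lambda>\<omega>. indicator I \<omega> * G \<omega>)"
    by (intro integrable_const_bound[where B = 1]) auto
  then have "(\<integral>\<omega>. indicator I \<omega> * G \<omega> \<partial>\<nu>) \<le> integral\<^sup>L \<nu> g"
    using g g_nonneg gibbs_le by (intro integral_mono) (auto simp: I_def G_def indicator_def)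
  then show ?thesis
    using EA_dist_DLR[OF EA C eta B] unfolding I_def G_def by simp
qed

definition unsat_boundary_pairs :: "vertex set \<Rightarrow> (vertex \<Rightarrow> real)
    \<Rightarrow> ((edge \<Rightarrow> real) \<times> (vertex \<Rightarrow> real)) set" where
  "unsat_boundary_pairs C eta = {p \<in> space (W_M \<Otimes>\<^sub>M spin_M (- C)). \<forall>e\<in>edge_boundary C.
     fst p e * glue C eta (snd p) (fst e) * glue C eta (snd p) (other_end e) < 0}"

lemma sets_unsat_boundary_pairs:
  "finite C \<Longrightarrow> unsat_boundary_pairs C eta \<in> sets (W_M \<Otimes>\<^sub>M spin_M (- C))"
  unfolding unsat_boundary_pairs_def using finite_edge_boundary by measurable

lemma unsatisfied_edge_boundary_subset_UN:
  "{\<omega> \<in> space Omega_M. \<forall>e\<in>edge_boundary C. unsatisfied \<omega> e}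
    \<subseteq> (\<Union>eta\<in>PiE C (\<lambda>_. {-1, 1}). {\<omega> \<in> space Omega_M. (\<forall>x\<in>C. snd \<omega> x = eta x) \<and>
        (fst \<omega>, restrict (snd \<omega>) (- C)) \<in> unsat_boundary_pairs C eta})"
proof
  fix \<omega> assume \<omega>: "\<omega> \<in> {\<omega> \<in> space Omega_M. \<forall>e\<in>edge_boundary C. unsatisfied \<omega> e}"
  then have spins: "snd \<omega> x \<in> {-1, 1}" for x using spin_mem_space_Omega_M by blast
  have "glue C (restrict (snd \<omega>) C) (restrict (snd \<omega>) (- C)) = snd \<omega>" by (auto simp: glue_def)
  with \<omega> spins have "(fst \<omega>, restrict (snd \<omega>) (- C)) \<in> unsat_boundary_pairs C (restrict (snd \<omega>) C)"
    by (auto simp: unsat_boundary_pairs_def unsatisfied_def space_pair_measure space_W_M space_spin_M)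
  moreover have "restrict (snd \<omega>) C \<in> PiE C (\<lambda>_. {-1, 1})" using spins by simp
  ultimately show "\<omega> \<in> (\<Union>eta\<in>PiE C (\<lambda>_. {-1, 1}). {\<omega> \<in> space Omega_M. (\<forall>x\<in>C. snd \<omega> x = eta x) \<and>
      (fst \<omega>, restrict (snd \<omega>) (- C)) \<in> unsat_boundary_pairs C eta})"
    using \<omega> by (intro UN_I[of "restrict (snd \<omega>) C"]) auto
qed

lemma integrable_exp_sum_abs_mult_gibbs_prob:
  assumes EA: "EA_dist \<beta> \<nu>" and b: "\<beta> \<ge> 0" and C: "finite C" and eta: "\<forall>x\<in>C. eta x \<in> {-1, 1}"
  shows "integrable \<nu> (\<lambda>\<omega>. exp (- 2 * \<beta> * (\<Sum>e\<in>S. \<bar>fst \<omega> e\<bar>)) * gibbs_prob \<beta> C (fst \<omega>) (snd \<omega>) eta)"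
proof -
  interpret prob_space \<nu> by (rule EA_distD(1)[OF EA])
  have "(\<lambda>\<omega>. exp (- 2 * \<beta> * (\<Sum>e\<in>S. \<bar>fst \<omega> e\<bar>)) * gibbs_prob \<beta> C (fst \<omega>) (snd \<omega>) eta)
      \<in> borel_measurable \<nu>"
    unfolding measurable_cong_sets[OF EA_distD(2)[OF EA] refl] by measurable
  moreover have "exp (- 2 * \<beta> * (\<Sum>e\<in>S. \<bar>w e\<bar>)) \<le> 1" for w :: "edge \<Rightarrow> real"
    using b by (simp add: sum_nonneg)
  then have "norm (exp (- 2 * \<beta> * (\<Sum>e\<in>S. \<bar>fst \<omega> e\<bar>)) * gibbs_prob \<beta> C (fst \<omega>) (snd \<omega>) eta) \<le> 1"
    for \<omega>
    using gibbs_prob_le_1[OF C eta] by (simp add: gibbs_prob_nonneg mult_le_one)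
  ultimately show ?thesis by (intro integrable_const_bound[where B = 1]) auto
qed

lemma measure_unsat_boundary_event_le:
  assumes EA: "EA_dist \<beta> \<nu>" and b: "\<beta> \<ge> 0" and C: "finite C" and eta: "eta \<in> PiE C (\<lambda>_. {-1, 1})"
  shows "measure \<nu> {\<omega> \<in> space \<nu>. (\<forall>x\<in>C. snd \<omega> x = eta x) \<and>
      (fst \<omega>, restrict (snd \<omega>) (- C)) \<in> unsat_boundary_pairs C eta}
    \<le> (\<integral>\<omega>. exp (- 2 * \<beta> * (\<Sum>e\<in>edge_boundary C. \<bar>fst \<omega> e\<bar>))
           * gibbs_prob \<beta> C (fst \<omega>) (snd \<omega>) (\<lambda>x. - eta x) \<partial>\<nu>)"
proof (rule measure_DLR_event_le_integral[OF EA C eta sets_unsat_boundary_pairs[OF C]])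
  have "\<forall>x\<in>C. - eta x \<in> {-1, 1}" using eta by auto
  then show "integrable \<nu> (\<lambda>\<omega>. exp (- 2 * \<beta> * (\<Sum>e\<in>edge_boundary C. \<bar>fst \<omega> e\<bar>))
      * gibbs_prob \<beta> C (fst \<omega>) (snd \<omega>) (\<lambda>x. - eta x))"
    by (rule integrable_exp_sum_abs_mult_gibbs_prob[OF EA b C])
  fix \<omega> assume \<omega>: "\<omega> \<in> space \<nu>"
  show "0 \<le> exp (- 2 * \<beta> * (\<Sum>e\<in>edge_boundary C. \<bar>fst \<omega> e\<bar>))
      * gibbs_prob \<beta> C (fst \<omega>) (snd \<omega>) (\<lambda>x. - eta x)"
    by (simp add: gibbs_prob_nonneg)
  assume "(fst \<omega>, restrict (snd \<omega>) (- C)) \<in> unsat_boundary_pairs C eta"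
  moreover have "glue C eta (restrict (snd \<omega>) (- C)) = glue C eta (snd \<omega>)" by (auto simp: glue_def)
  ultimately have "\<forall>e\<in>edge_boundary C.
      fst \<omega> e * glue C eta (snd \<omega>) (fst e) * glue C eta (snd \<omega>) (other_end e) < 0"
    by (simp add: unsat_boundary_pairs_def)
  moreover have "\<forall>x\<in>C. eta x \<in> {-1, 1}" using eta by auto
  moreover have "\<forall>x. snd \<omega> x \<in> {-1, 1}"
    using \<omega> sets_eq_imp_space_eq[OF EA_distD(2)[OF EA]] spin_mem_space_Omega_M by blast
  ultimately show "gibbs_prob \<beta> C (fst \<omega>) (snd \<omega>) eta
      \<le> exp (- 2 * \<beta> * (\<Sum>e\<in>edge_boundary C. \<bar>fst \<omega> e\<bar>))
        * gibbs_prob \<beta> C (fst \<omega>) (snd \<omega>) (\<lambda>x. - eta x)"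
    by (simp add: gibbs_prob_flip[OF C])
qed

text \<open>The event splits according to the spins in \<open>C\<close>; the flipped Gibbs weights
  in the bounds of \<open>measure_unsat_boundary_event_le\<close> sum to \<open>1\<close>.\<close>
lemma measure_unsatisfied_edge_boundary_le:
  assumes EA: "EA_dist \<beta> \<nu>" and b: "\<beta> \<ge> 0" and C: "finite C"
  shows "measure \<nu> {\<omega> \<in> space \<nu>. \<forall>e\<in>edge_boundary C. unsatisfied \<omega> e}
    \<le> (\<integral>\<omega>. exp (- 2 * \<beta> * (\<Sum>e\<in>edge_boundary C. \<bar>fst \<omega> e\<bar>)) \<partial>\<nu>)"
proof -
  interpret prob_space \<nu> by (rule EA_distD(1)[OF EA])
  note sets_eq = EA_distD(2)[OF EA]
  note space_eq = sets_eq_imp_space_eq[OF sets_eq]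
  define PE where "PE = PiE C (\<lambda>_. {-1::real, 1})"
  define X where "X \<omega> = exp (- 2 * \<beta> * (\<Sum>e\<in>edge_boundary C. \<bar>fst \<omega> e\<bar>))" for \<omega> :: config
  define G where "G eta \<omega> = gibbs_prob \<beta> C (fst \<omega>) (snd \<omega>) (\<lambda>x. - eta x)" for eta \<omega>
  define E where "E eta = {\<omega> \<in> space \<nu>. (\<forall>x\<in>C. snd \<omega> x = eta x) \<and>
    (fst \<omega>, restrict (snd \<omega>) (- C)) \<in> unsat_boundary_pairs C eta}" for eta
  have fin_PE: "finite PE" unfolding PE_def using C by (simp add: finite_PiE)
  have XG_int: "integrable \<nu> (\<lambda>\<omega>. X \<omega> * G eta \<omega>)" if "eta \<in> PE" for eta
    unfolding X_def G_def using that
    by (intro integrable_exp_sum_abs_mult_gibbs_prob[OF EA b C]) (auto simp: PE_def)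
  have E_sets: "E eta \<in> sets \<nu>" for eta
    unfolding E_def sets_eq space_eq
    using pred_outside_projection[OF sets_unsat_boundary_pairs[OF C]] C by measurable
  have "{\<omega> \<in> space \<nu>. \<forall>e\<in>edge_boundary C. unsatisfied \<omega> e} \<subseteq> (\<Union>eta\<in>PE. E eta)"
    using unsatisfied_edge_boundary_subset_UN[of C] unfolding E_def PE_def space_eq .
  then have "measure \<nu> {\<omega> \<in> space \<nu>. \<forall>e\<in>edge_boundary C. unsatisfied \<omega> e}
      \<le> measure \<nu> (\<Union>eta\<in>PE. E eta)"
    using fin_PE E_sets by (intro finite_measure_mono) auto
  also have "\<dots> \<le> (\<Sum>eta\<in>PE. measure \<nu> (E eta))"
    by (rule measure_UNION_le[OF fin_PE E_sets])
  also have "\<dots> \<le> (\<Sum>eta\<in>PE. \<integral>\<omega>. X \<omega> * G eta \<omega> \<partial>\<nu>)"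
    using measure_unsat_boundary_event_le[OF EA b C]
    unfolding E_def X_def G_def PE_def by (intro sum_mono) blast
  also have "\<dots> = (\<integral>\<omega>. (\<Sum>eta\<in>PE. X \<omega> * G eta \<omega>) \<partial>\<nu>)"
    using XG_int by (simp add: Bochner_Integration.integral_sum)
  also have "\<dots> = integral\<^sup>L \<nu> X"
    by (simp add: G_def PE_def sum_gibbs_prob_uminus[OF C] flip: sum_distrib_left)
  finally show ?thesis unfolding X_def .
qed

section \<open>Finitely many unsatisfied cycles\<close>

lemma EA_dist_integral_exp_sum_abs_le:
  assumes EA: "EA_dist \<beta> \<nu>" and b: "\<beta> > 0" and S: "finite S"
  shows "(\<integral>\<omega>. exp (- 2 * \<beta> * (\<Sum>e\<in>S. \<bar>fst \<omega> e\<bar>)) \<partial>\<nu>) \<le> (1 / \<beta>) ^ card S"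
proof -
  define f where "f w = exp (- 2 * \<beta> * (\<Sum>e\<in>S. \<bar>w e\<bar>))" for w :: "edge \<Rightarrow> real"
  have distr_eq: "distr \<nu> W_M fst = gauss_iid" by (rule EA_distD(3)[OF EA])
  have fst_meas: "fst \<in> \<nu> \<rightarrow>\<^sub>M W_M"
    unfolding measurable_cong_sets[OF EA_distD(2)[OF EA] refl] Omega_M_def by (rule measurable_fst)
  have f_meas: "f \<in> borel_measurable W_M" unfolding f_def by measurable
  have sets_gauss: "sets gauss_iid = sets W_M" by (metis distr_eq sets_distr)
  have "f \<in> borel_measurable gauss_iid"
    unfolding measurable_cong_sets[OF sets_gauss refl] by (rule f_meas)
  have "(\<integral>\<omega>. f (fst \<omega>) \<partial>\<nu>) = integral\<^sup>L gauss_iid f"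
    using integral_distr[OF fst_meas f_meas] distr_eq by simp
  also have "\<dots> = enn2real (\<integral>\<^sup>+w. ennreal (f w) \<partial>gauss_iid)"
    by (rule integral_eq_nn_integral) (simp_all add: f_def \<open>f \<in> borel_measurable gauss_iid\<close>)
  also have "\<dots> \<le> (1 / \<beta>) ^ card S"
    using nn_integral_gauss_iid_exp_sum_abs_le[OF b S] b by (intro enn2real_leI) (simp_all add: f_def)
  finally show ?thesis unfolding f_def .
qed

lemma measure_unsatisfied_cycle_le:
  assumes EA: "EA_dist \<beta> \<nu>" and b: "\<beta> > 0" and cyc: "dual_cycle_list vs"
  shows "measure \<nu> {\<omega> \<in> space \<nu>. \<forall>e\<in>cycle_edges vs. unsatisfied \<omega> e} \<le> (1 / \<beta>) ^ length vs"
proof -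
  obtain C where C: "finite C" and cut: "cycle_edges vs = edge_boundary C"
    using cycle_edges_eq_edge_boundary[OF cyc] by blast
  have "measure \<nu> {\<omega> \<in> space \<nu>. \<forall>e\<in>cycle_edges vs. unsatisfied \<omega> e}
      \<le> (\<integral>\<omega>. exp (- 2 * \<beta> * (\<Sum>e\<in>cycle_edges vs. \<bar>fst \<omega> e\<bar>)) \<partial>\<nu>)"
    unfolding cut using measure_unsatisfied_edge_boundary_le[OF EA _ C] b by simp
  also have "\<dots> \<le> (1 / \<beta>) ^ card (cycle_edges vs)"
    by (rule EA_dist_integral_exp_sum_abs_le[OF EA b finite_cycle_edges])
  finally show ?thesis by (simp add: card_cycle_edges[OF cyc])
qed

lemma EA_dist_sets_unsatisfied_cycle:
  assumes "EA_dist \<beta> \<nu>"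
  shows "{\<omega> \<in> space \<nu>. \<forall>e\<in>cycle_edges vs. unsatisfied \<omega> e} \<in> sets \<nu>"
  unfolding EA_distD(2)[OF assms] sets_eq_imp_space_eq[OF EA_distD(2)[OF assms]]
  by (rule sets_all_unsatisfied[OF finite_cycle_edges])

lemma measure_unsatisfied_cycles_through_le:
  assumes EA: "EA_dist \<beta> \<nu>" and b: "\<beta> > 0"
  shows "measure \<nu> (\<Union>vs\<in>cycles_through n d. {\<omega> \<in> space \<nu>. \<forall>e\<in>cycle_edges vs. unsatisfied \<omega> e})
    \<le> (8 / \<beta>) ^ n"
proof -
  interpret prob_space \<nu> by (rule EA_distD(1)[OF EA])
  have "measure \<nu> (\<Union>vs\<in>cycles_through n d. {\<omega> \<in> space \<nu>. \<forall>e\<in>cycle_edges vs. unsatisfied \<omega> e})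
      \<le> (\<Sum>vs\<in>cycles_through n d. measure \<nu> {\<omega> \<in> space \<nu>. \<forall>e\<in>cycle_edges vs. unsatisfied \<omega> e})"
    by (rule measure_UNION_le[OF finite_cycles_through EA_dist_sets_unsatisfied_cycle[OF EA]])
  also have "\<dots> \<le> (\<Sum>vs\<in>cycles_through n d. (1 / \<beta>) ^ n)"
    using measure_unsatisfied_cycle_le[OF EA b] by (intro sum_mono) (auto simp: cycles_through_def)
  also have "\<dots> = real (card (cycles_through n d)) * (1 / \<beta>) ^ n" by simp
  also have "\<dots> \<le> real (n * 4 ^ n) * (1 / \<beta>) ^ n"
    using card_cycles_through_le[of n d] b by (intro mult_right_mono) (simp_all only: of_nat_le_iff, simp)
  also have "\<dots> \<le> real (2 ^ n * 4 ^ n) * (1 / \<beta>) ^ n"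
    using less_exp[of n] b by (intro mult_right_mono) simp_all
  also have "\<dots> = (8 / \<beta>) ^ n" by (simp add: power_mult_distrib[symmetric] power_divide)
  finally show ?thesis .
qed

lemma AE_finite_unsatisfied_cycles_through:
  assumes EA: "EA_dist \<beta> \<nu>" and b: "\<beta> > 8"
  shows "AE \<omega> in \<nu>. finite {S. dual_cycle_through d S \<and> (\<forall>e\<in>S. unsatisfied \<omega> e)}"
proof -
  interpret prob_space \<nu> by (rule EA_distD(1)[OF EA])
  define A where "A n = (\<Union>vs\<in>cycles_through n d. {\<omega> \<in> space \<nu>. \<forall>e\<in>cycle_edges vs. unsatisfied \<omega> e})"
    for n
  have A_sets: "A n \<in> sets \<nu>" for n
    unfolding A_def by (intro sets.finite_UN finite_cycles_through EA_dist_sets_unsatisfied_cycle[OF EA])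
  have summ: "summable (\<lambda>n. measure \<nu> (A n))"
  proof (rule summable_comparison_test'[where g = "\<lambda>n. (8 / \<beta>) ^ n"])
    show "summable (\<lambda>n. (8 / \<beta>) ^ n)" using b by (intro summable_geometric) simp
    show "norm (measure \<nu> (A n)) \<le> (8 / \<beta>) ^ n" for n
      unfolding A_def using measure_unsatisfied_cycles_through_le[OF EA, of n d] b by simp
  qed
  have "AE \<omega> in \<nu>. eventually (\<lambda>n. \<omega> \<in> space \<nu> - A n) sequentially"
    by (rule borel_cantelli_AE1[OF A_sets _ summ]) (simp add: emeasure_eq_measure)
  then show ?thesis
  proof (rule AE_mp, intro AE_I2 impI)
    fix \<omega> assume "\<omega> \<in> space \<nu>" and "eventually (\<lambda>n. \<omega> \<in> space \<nu> - A n) sequentially"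
    then obtain N where N: "\<And>n. n \<ge> N \<Longrightarrow> \<omega> \<notin> A n" by (auto simp: eventually_sequentially)
    have "{S. dual_cycle_through d S \<and> (\<forall>e\<in>S. unsatisfied \<omega> e)} \<subseteq> (\<Union>n<N. cycle_edges ` cycles_through n d)"
    proof
      fix S assume "S \<in> {S. dual_cycle_through d S \<and> (\<forall>e\<in>S. unsatisfied \<omega> e)}"
      then obtain vs where vs: "vs \<in> cycles_through (length vs) d" and S: "S = cycle_edges vs"
        and "\<forall>e\<in>S. unsatisfied \<omega> e"
        unfolding dual_cycle_through_def cycles_through_def by auto
      with \<open>\<omega> \<in> space \<nu>\<close> have "\<omega> \<in> A (length vs)" unfolding A_def by blast
      with N have "length vs < N" by (meson not_le)
      with vs S show "S \<in> (\<Union>n<N. cycle_edges ` cycles_through n d)" by blast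
    qed
    then show "finite {S. dual_cycle_through d S \<and> (\<forall>e\<in>S. unsatisfied \<omega> e)}"
      by (rule finite_subset) (intro finite_UN_I finite_lessThan finite_imageI finite_cycles_through)
  qed
qed

theorem lemma2p6:
  shows "\<exists>\<beta>0 > 0. \<forall>\<beta> > \<beta>0. \<forall>\<nu>. EA_dist \<beta> \<nu> \<and> translation_invariant \<nu> \<longrightarrow>
     (AE \<omega> in \<nu>. \<forall>d. finite {S. dual_cycle_through d S \<and> (\<forall>e\<in>S. unsatisfied \<omega> e)})"
proof (intro exI[of _ 8] conjI allI impI)
  fix \<beta> :: real and \<nu> assume "\<beta> > 8" and "EA_dist \<beta> \<nu> \<and> translation_invariant \<nu>"
  then have "AE \<omega> in \<nu>. finite {S. dual_cycle_through d S \<and> (\<forall>e\<in>S. unsatisfied \<omega> e)}" for d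
    using AE_finite_unsatisfied_cycles_through by blast
  then show "AE \<omega> in \<nu>. \<forall>d. finite {S. dual_cycle_through d S \<and> (\<forall>e\<in>S. unsatisfied \<omega> e)}"
    by (subst AE_all_countable) blast
qed simp

end
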